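(* Let $\kappa\geq\omega$ be a cardinal smaller than the first measurable cardinal, and let $\Phi\subseteq P(\kappa)$ be a filter all of whose elements are infinite sets. Then there is a partition $\kappa=\bigcup_{n\in\omega}I_n$ (into pairwise disjoint sets, some possibly empty) such that for every $F\in\Phi$ the set $\{n\in\omega: F\cap I_n\neq\emptyset\}$ is infinite.
   Context: A filter on a set $I$ is a nonempty family of subsets of $I$ closed under supersets and finite intersections. "Smaller than the first measurable cardinal" means: if measurable cardinals exist, $\kappa$ is below the least one; if none exist, every cardinal qualifies. Equivalently, every countably complete ultrafilter on $\kappa$ is principal. *)

theory Defs
  imports Main
begin

definition is_filter_on :: "'a set \<Rightarrow> 'a set set \<Rightarrow> bool" where
  "is_filter_on I \<Phi> \<longleftrightarrow>
     \<Phi> \<subseteq> Pow I \<and> \<Phi> \<noteq> {} \<and>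
     (\<forall>A B. A \<in> \<Phi> \<and> A \<subseteq> B \<and> B \<subseteq> I \<longrightarrow> B \<in> \<Phi>) \<and>
     (\<forall>A B. A \<in> \<Phi> \<and> B \<in> \<Phi> \<longrightarrow> A \<inter> B \<in> \<Phi>)"

definition is_ultrafilter_on :: "'a set \<Rightarrow> 'a set set \<Rightarrow> bool" where
  "is_ultrafilter_on I U \<longleftrightarrow>
     is_filter_on I U \<and> {} \<notin> U \<and> (\<forall>A. A \<subseteq> I \<longrightarrow> A \<in> U \<or> I - A \<in> U)"

definition countably_complete :: "'a set set \<Rightarrow> bool" where
  "countably_complete U \<longleftrightarrow> (\<forall>X :: nat \<Rightarrow> 'a set. (\<forall>n. X n \<in> U) \<longrightarrow> (\<Inter>n. X n) \<in> U)"

definition principal_on :: "'a set \<Rightarrow> 'a set set \<Rightarrow> bool" where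
  "principal_on I U \<longleftrightarrow> (\<exists>x\<in>I. U = {A. A \<subseteq> I \<and> x \<in> A})"

definition below_first_measurable :: "'a set \<Rightarrow> bool" where
  "below_first_measurable I \<longleftrightarrow>
     (\<forall>U. is_ultrafilter_on I U \<and> countably_complete U \<longrightarrow> principal_on I U)"

end

theory Submission
  imports Defs
begin

text \<open>Extend \<open>\<Phi>\<close> to an ultrafilter \<open>U\<close> all of whose members are still infinite. Such a \<open>U\<close> is
  not principal, so below the first measurable it is not countably complete: there are
  \<open>Y\<^sub>0 \<supseteq> Y\<^sub>1 \<supseteq> \<dots>\<close> in \<open>U\<close> with empty intersection. The layers \<open>I - Y\<^sub>0\<close>, \<open>Y\<^sub>k - Y\<^sub>k\<^sub>+\<^sub>1\<close>
  partition \<open>I\<close>, and a set \<open>F \<in> \<Phi>\<close> meeting only finitely many layers would be disjoint from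
  some \<open>Y\<^sub>N\<close>, although \<open>F \<inter> Y\<^sub>N \<in> U\<close> is infinite.\<close>

lemma filter_on_subset: "is_filter_on I U \<Longrightarrow> F \<in> U \<Longrightarrow> F \<subseteq> I"
  unfolding is_filter_on_def by blast

lemma filter_on_Int: "is_filter_on I U \<Longrightarrow> A \<in> U \<Longrightarrow> B \<in> U \<Longrightarrow> A \<inter> B \<in> U"
  unfolding is_filter_on_def by blast

lemma filter_on_mono: "is_filter_on I U \<Longrightarrow> A \<in> U \<Longrightarrow> A \<subseteq> B \<Longrightarrow> B \<subseteq> I \<Longrightarrow> B \<in> U"
  unfolding is_filter_on_def by blast

lemma filter_on_nonempty: "is_filter_on I U \<Longrightarrow> U \<noteq> {}"
  unfolding is_filter_on_def by blast

lemma filter_onI: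
  assumes "U \<subseteq> Pow I" "U \<noteq> {}"
    and "\<And>A B. A \<in> U \<Longrightarrow> A \<subseteq> B \<Longrightarrow> B \<subseteq> I \<Longrightarrow> B \<in> U"
    and "\<And>A B. A \<in> U \<Longrightarrow> B \<in> U \<Longrightarrow> A \<inter> B \<in> U"
  shows "is_filter_on I U"
  unfolding is_filter_on_def using assms by (intro conjI allI impI) auto

lemma filter_on_Union_chain:
  assumes "\<C> \<noteq> {}" and chain: "\<forall>X\<in>\<C>. \<forall>Y\<in>\<C>. X \<subseteq> Y \<or> Y \<subseteq> X"
    and filters: "\<And>G. G \<in> \<C> \<Longrightarrow> is_filter_on I G"
  shows "is_filter_on I (\<Union>\<C>)"
proof (rule filter_onI)
  show "\<Union>\<C> \<subseteq> Pow I"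
    using filter_on_subset[OF filters] by blast
  obtain G where "G \<in> \<C>" using \<open>\<C> \<noteq> {}\<close> by blast
  then show "\<Union>\<C> \<noteq> {}"
    using filter_on_nonempty[OF filters] by blast
  show "B \<in> \<Union>\<C>" if "A \<in> \<Union>\<C>" "A \<subseteq> B" "B \<subseteq> I" for A B
    using that filter_on_mono[OF filters] by blast
  show "A \<inter> B \<in> \<Union>\<C>" if A: "A \<in> \<Union>\<C>" and B: "B \<in> \<Union>\<C>" for A B
  proof -
    obtain G H where "G \<in> \<C>" "H \<in> \<C>" "A \<in> G" "B \<in> H"
      using A B by blast
    with chain consider "A \<in> H" "B \<in> H" "H \<in> \<C>" | "A \<in> G" "B \<in> G" "G \<in> \<C>"
      by blast
    then show ?thesis
      by cases (use filter_on_Int[OF filters] in blast)+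
  qed
qed

lemma filter_on_trace:
  assumes "is_filter_on I M"
  shows "is_filter_on I {B. B \<subseteq> I \<and> (\<exists>G\<in>M. G \<inter> A \<subseteq> B)}" (is "is_filter_on I ?N")
proof (rule filter_onI)
  obtain G where "G \<in> M" using filter_on_nonempty[OF assms] by blast
  then show "?N \<noteq> {}"
    using filter_on_subset[OF assms] by blast
  show "B \<inter> C \<in> ?N" if B: "B \<in> ?N" and C: "C \<in> ?N" for B C
  proof -
    obtain G H where G: "G \<in> M" "G \<inter> A \<subseteq> B" and H: "H \<in> M" "H \<inter> A \<subseteq> C"
      using B C by blast
    have "G \<inter> H \<in> M"
      using filter_on_Int[OF assms G(1) H(1)] .
    moreover have "G \<inter> H \<inter> A \<subseteq> B \<inter> C"
      using G(2) H(2) by blast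
    ultimately show ?thesis
      using B by blast
  qed
qed blast+

lemma ex_ultrafilter_of_infinite_sets:
  assumes "is_filter_on I \<Phi>" and "\<forall>F\<in>\<Phi>. infinite F"
  shows "\<exists>U. is_ultrafilter_on I U \<and> \<Phi> \<subseteq> U \<and> (\<forall>F\<in>U. infinite F)"
proof -
  define \<A> where "\<A> = {G. is_filter_on I G \<and> \<Phi> \<subseteq> G \<and> (\<forall>F\<in>G. infinite F)}"
  have "\<exists>M\<in>\<A>. \<forall>X\<in>\<A>. M \<subseteq> X \<longrightarrow> X = M"
  proof (rule subset_Zorn_nonempty)
    show "\<A> \<noteq> {}"
      using assms unfolding \<A>_def by blast
    show "\<Union>\<C> \<in> \<A>" if "\<C> \<noteq> {}" "subset.chain \<A> \<C>" for \<C>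
      using that filter_on_Union_chain[of \<C> I]
      unfolding subset_chain_def \<A>_def by blast
  qed
  then obtain M where "M \<in> \<A>" and maximal: "\<And>X. X \<in> \<A> \<Longrightarrow> M \<subseteq> X \<Longrightarrow> X = M"
    by blast
  then have M: "is_filter_on I M" "\<Phi> \<subseteq> M" "\<forall>F\<in>M. infinite F"
    unfolding \<A>_def by simp_all
  have large_traces: "A \<in> M" if "A \<subseteq> I" "\<forall>G\<in>M. infinite (G \<inter> A)" for A
  proof -
    define N where "N = {B. B \<subseteq> I \<and> (\<exists>G\<in>M. G \<inter> A \<subseteq> B)}"
    have "is_filter_on I N"
      unfolding N_def by (rule filter_on_trace[OF M(1)])
    moreover have "M \<subseteq> N"
      using filter_on_subset[OF M(1)] unfolding N_def by blast
    moreover have "\<forall>F\<in>N. infinite F"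
    proof
      fix F assume "F \<in> N"
      then obtain G where "G \<in> M" "G \<inter> A \<subseteq> F"
        unfolding N_def by blast
      then show "infinite F"
        using that(2) finite_subset by blast
    qed
    ultimately have "N = M"
      using maximal M(2) unfolding \<A>_def by blast
    obtain G where "G \<in> M"
      using filter_on_nonempty[OF M(1)] by blast
    then have "A \<in> N"
      using that(1) unfolding N_def by blast
    with \<open>N = M\<close> show ?thesis
      by simp
  qed
  have "A \<in> M \<or> I - A \<in> M" if A: "A \<subseteq> I" for A
  proof (rule ccontr)
    assume "\<not> (A \<in> M \<or> I - A \<in> M)"
    then have "\<not> (\<forall>G\<in>M. infinite (G \<inter> A))" "\<not> (\<forall>H\<in>M. infinite (H \<inter> (I - A)))"
      using large_traces[of A] large_traces[of "I - A"] A by auto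
    then obtain G H where "G \<in> M" "finite (G \<inter> A)" "H \<in> M" "finite (H \<inter> (I - A))"
      by blast
    moreover have "G \<inter> H \<subseteq> (G \<inter> A) \<union> (H \<inter> (I - A))"
      using filter_on_subset[OF M(1) \<open>H \<in> M\<close>] by blast
    ultimately have "finite (G \<inter> H)"
      by (meson finite_Un finite_subset)
    moreover have "G \<inter> H \<in> M"
      using filter_on_Int[OF M(1) \<open>G \<in> M\<close> \<open>H \<in> M\<close>] .
    ultimately show False
      using M(3) by blast
  qed
  then have "is_ultrafilter_on I M"
    using M unfolding is_ultrafilter_on_def by blast
  with M show ?thesis by blast
qed

lemma not_principal_on_if_infinite: "\<forall>F\<in>U. infinite F \<Longrightarrow> \<not> principal_on I U"
  unfolding principal_on_def by auto

lemma ex_decseq_with_empty_Inter: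
  assumes "is_ultrafilter_on I U" and "\<not> countably_complete U"
  shows "\<exists>Y :: nat \<Rightarrow> 'a set. (\<forall>n. Y n \<in> U) \<and> antimono Y \<and> (\<Inter>n. Y n) = {}"
proof -
  have U: "is_filter_on I U"
    using assms(1) unfolding is_ultrafilter_on_def by blast
  obtain X :: "nat \<Rightarrow> 'a set" where X: "\<And>n. X n \<in> U" and "(\<Inter>n. X n) \<notin> U"
    using assms(2) unfolding countably_complete_def by blast
  moreover have "(\<Inter>n. X n) \<subseteq> I"
    using filter_on_subset[OF U X[of 0]] by blast
  ultimately have co: "I - (\<Inter>n. X n) \<in> U"
    using assms(1) unfolding is_ultrafilter_on_def by blast
  define Y where "Y n = (I - (\<Inter>n. X n)) \<inter> (\<Inter>k\<le>n. X k)" for n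
  have "Y n \<in> U" for n
  proof (induction n)
    case 0
    then show ?case
      using filter_on_Int[OF U co X] by (simp add: Y_def)
  next
    case (Suc n)
    have "Y (Suc n) = Y n \<inter> X (Suc n)"
      by (simp add: Y_def atMost_Suc Int_ac)
    then show ?case
      using filter_on_Int[OF U Suc X] by simp
  qed
  moreover have "antimono Y"
    unfolding Y_def by (rule antimonoI) fastforce
  moreover have "(\<Inter>n. Y n) = {}"
    unfolding Y_def by blast
  ultimately show ?thesis
    by (intro exI[of _ Y]) simp
qed

fun layer :: "'a set \<Rightarrow> (nat \<Rightarrow> 'a set) \<Rightarrow> nat \<Rightarrow> 'a set" where
  "layer I Y 0 = I - Y 0"
| "layer I Y (Suc k) = Y k - Y (Suc k)"

lemma layer_Int_later:
  assumes "antimono Y" and "m \<le> k"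
  shows "layer I Y m \<inter> Y k = {}"
proof (cases m)
  case 0
  have "Y k \<subseteq> Y 0"
    using antimonoD[OF assms(1), of 0 k] by simp
  with 0 show ?thesis by auto
next
  case (Suc j)
  have "Y k \<subseteq> Y (Suc j)"
    using antimonoD[OF assms(1), of "Suc j" k] assms(2) Suc by simp
  with Suc show ?thesis by auto
qed

lemma layer_disjoint:
  assumes "antimono Y" and "m \<noteq> n"
  shows "layer I Y m \<inter> layer I Y n = {}"
proof -
  have "layer I Y m \<inter> layer I Y n = {}" if "m < n" for m n
  proof -
    obtain k where k: "n = Suc k" "m \<le> k"
      using \<open>m < n\<close> by (cases n) auto
    have "layer I Y n \<subseteq> Y k"
      using k(1) by auto
    then show ?thesis
      using layer_Int_later[OF assms(1) k(2), of I] by blast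
  qed
  with assms(2) show ?thesis
    by (metis Int_commute linorder_neqE_nat)
qed

lemma UN_layer_atMost:
  assumes "antimono Y" and "Y 0 \<subseteq> I"
  shows "(\<Union>n\<le>N. layer I Y n) = I - Y N"
proof (induction N)
  case (Suc N)
  have "Y (Suc N) \<subseteq> Y N"
    using antimonoD[OF assms(1), of N "Suc N"] by simp
  moreover have "Y N \<subseteq> I"
    using antimonoD[OF assms(1), of 0 N] assms(2) by simp
  ultimately show ?case
    using Suc by (auto simp: atMost_Suc)
qed simp

lemma UN_layer:
  assumes "antimono Y" and "Y 0 \<subseteq> I" and "(\<Inter>n. Y n) = {}"
  shows "(\<Union>n. layer I Y n) = I"
proof
  show "(\<Union>n. layer I Y n) \<subseteq> I"
    using UN_layer_atMost[OF assms(1,2)] by blast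
  show "I \<subseteq> (\<Union>n. layer I Y n)"
  proof
    fix x assume "x \<in> I"
    obtain N where "x \<notin> Y N" using assms(3) by blast
    with \<open>x \<in> I\<close> show "x \<in> (\<Union>n. layer I Y n)"
      using UN_layer_atMost[OF assms(1,2), of N] by blast
  qed
qed

lemma infinite_layers_meeting:
  assumes "antimono Y" and "Y 0 \<subseteq> I" and "(\<Inter>n. Y n) = {}"
    and meets: "\<And>N. F \<inter> Y N \<noteq> {}"
  shows "infinite {n. F \<inter> layer I Y n \<noteq> {}}"
proof
  assume "finite {n. F \<inter> layer I Y n \<noteq> {}}"
  then obtain N where N: "\<And>n. F \<inter> layer I Y n \<noteq> {} \<Longrightarrow> n \<le> N"
    using finite_nat_set_iff_bounded_le by auto
  obtain x where "x \<in> F" "x \<in> Y N"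
    using meets by blast
  moreover have "x \<in> I"
    using \<open>x \<in> Y N\<close> assms(1,2) antimonoD[of Y 0 N] by blast
  then obtain n where "x \<in> layer I Y n"
    using UN_layer[OF assms(1-3)] by blast
  ultimately show False
    using N layer_Int_later[OF assms(1)] by blast
qed

theorem fact2p2:
  fixes I :: "'a set" and \<Phi> :: "'a set set"
  assumes "infinite I"
    and "below_first_measurable I"
    and "is_filter_on I \<Phi>"
    and "\<forall>F\<in>\<Phi>. infinite F"
  shows "\<exists>P :: nat \<Rightarrow> 'a set.
           (\<Union>n. P n) = I \<and>
           (\<forall>m n. m \<noteq> n \<longrightarrow> P m \<inter> P n = {}) \<and>
           (\<forall>F\<in>\<Phi>. infinite {n. F \<inter> P n \<noteq> {}})"
proof -
  obtain U where U: "is_ultrafilter_on I U" and "\<Phi> \<subseteq> U" and U_infinite: "\<forall>F\<in>U. infinite F"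
    using ex_ultrafilter_of_infinite_sets assms(3,4) by blast
  then have "\<not> countably_complete U"
    using assms(2) not_principal_on_if_infinite unfolding below_first_measurable_def by blast
  then obtain Y :: "nat \<Rightarrow> 'a set" where Y: "\<And>n. Y n \<in> U" and "antimono Y" and "(\<Inter>n. Y n) = {}"
    using ex_decseq_with_empty_Inter[OF U] by blast
  have U_filter: "is_filter_on I U"
    using U unfolding is_ultrafilter_on_def by blast
  have "Y 0 \<subseteq> I"
    using filter_on_subset[OF U_filter Y] .
  have meets: "F \<inter> Y N \<noteq> {}" if "F \<in> \<Phi>" for F N
  proof -
    have "F \<inter> Y N \<in> U"
      using filter_on_Int[OF U_filter _ Y, of F N] that \<open>\<Phi> \<subseteq> U\<close> by blast
    then show ?thesis
      using U_infinite by (metis finite.emptyI)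
  qed
  have "(\<Union>n. layer I Y n) = I"
    using UN_layer[OF \<open>antimono Y\<close> \<open>Y 0 \<subseteq> I\<close> \<open>(\<Inter>n. Y n) = {}\<close>] .
  moreover have "\<forall>m n. m \<noteq> n \<longrightarrow> layer I Y m \<inter> layer I Y n = {}"
    using layer_disjoint[OF \<open>antimono Y\<close>] by blast
  moreover have "\<forall>F\<in>\<Phi>. infinite {n. F \<inter> layer I Y n \<noteq> {}}"
    using infinite_layers_meeting[OF \<open>antimono Y\<close> \<open>Y 0 \<subseteq> I\<close> \<open>(\<Inter>n. Y n) = {}\<close>] meets
    by blast
  ultimately show ?thesis
    by blast
qed

end
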